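(* Let $H$ be a fixed connected graph with $k=|V(H)|>1$. Let $G$ be an online graph with vertices $v_1,\dots,v_n$ (in order of appearance) and let $b_1,\dots,b_n\in\{0,1\}$ be advice bits with $b_t$ assigned to $v_t$. Suppose every induced copy of $H$ in $G$ contains at least one vertex $v_t$ with $b_t=1$. Then there is an online graph $G'$ with vertices $v_1,\dots,v_n,v_{n+1},\dots,v_{n'}$ such that $G'_n=G$ (the first $n$ revealed vertices of $G'$ induce exactly $G$), and the advice sequence $b'$ defined by $b'_t=b_t$ for $t\le n$ and $b'_t=0$ for $t>n$ is correct for $G'$ and is the only correct advice for $G'$; that is, the set $\{v_t: b_t=1\}$ is the unique minimum-size set $S\subseteq V(G')$ such that $G'-S$ is $H$-free.
   Context: All graphs are finite, simple and undirected. An induced copy of $H$ in $G$ is an induced subgraph isomorphic to $H$; $G$ is $H$-free if it has none. For $S\subseteq V(G)$, $G-S=G[V(G)\setminus S]$. An online graph has its vertices revealed one at a time, with $G_t$ denoting the subgraph induced by the first $t$ revealed vertices. Advice (predictions) assigns one bit to each vertex; it is correct for a graph if the set of vertices with bit $1$ is a minimum-size set $S$ with $G-S$ $H$-free. *)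

theory Defs
  imports Main
begin

definition simple_graph :: "'a set \<Rightarrow> ('a \<Rightarrow> 'a \<Rightarrow> bool) \<Rightarrow> bool" where
  "simple_graph V E \<longleftrightarrow> finite V \<and> (\<forall>u v. E u v \<longrightarrow> u \<in> V \<and> v \<in> V)
     \<and> (\<forall>u v. E u v \<longrightarrow> E v u) \<and> (\<forall>u. \<not> E u u)"

definition connected_graph :: "'a set \<Rightarrow> ('a \<Rightarrow> 'a \<Rightarrow> bool) \<Rightarrow> bool" where
  "connected_graph V E \<longleftrightarrow> V \<noteq> {} \<and> (\<forall>u\<in>V. \<forall>v\<in>V. E\<^sup>*\<^sup>* u v)"

definition induced_copy ::
  "'a set \<Rightarrow> ('a \<Rightarrow> 'a \<Rightarrow> bool) \<Rightarrow> 'b set \<Rightarrow> ('b \<Rightarrow> 'b \<Rightarrow> bool) \<Rightarrow> 'a set \<Rightarrow> bool" where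
  "induced_copy V E VH EH X \<longleftrightarrow> X \<subseteq> V \<and>
     (\<exists>f. bij_betw f VH X \<and> (\<forall>u\<in>VH. \<forall>v\<in>VH. EH u v \<longleftrightarrow> E (f u) (f v)))"

definition H_free :: "'a set \<Rightarrow> ('a \<Rightarrow> 'a \<Rightarrow> bool) \<Rightarrow> 'b set \<Rightarrow> ('b \<Rightarrow> 'b \<Rightarrow> bool) \<Rightarrow> bool" where
  "H_free V E VH EH \<longleftrightarrow> \<not> (\<exists>X. induced_copy V E VH EH X)"

definition deletion_set ::
  "'a set \<Rightarrow> ('a \<Rightarrow> 'a \<Rightarrow> bool) \<Rightarrow> 'b set \<Rightarrow> ('b \<Rightarrow> 'b \<Rightarrow> bool) \<Rightarrow> 'a set \<Rightarrow> bool" where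
  "deletion_set V E VH EH S \<longleftrightarrow> S \<subseteq> V \<and> H_free (V - S) E VH EH"

definition min_deletion_set ::
  "'a set \<Rightarrow> ('a \<Rightarrow> 'a \<Rightarrow> bool) \<Rightarrow> 'b set \<Rightarrow> ('b \<Rightarrow> 'b \<Rightarrow> bool) \<Rightarrow> 'a set \<Rightarrow> bool" where
  "min_deletion_set V E VH EH S \<longleftrightarrow> deletion_set V E VH EH S \<and>
     (\<forall>T. deletion_set V E VH EH T \<longrightarrow> card S \<le> card T)"

definition correct_advice ::
  "'a set \<Rightarrow> ('a \<Rightarrow> 'a \<Rightarrow> bool) \<Rightarrow> 'b set \<Rightarrow> ('b \<Rightarrow> 'b \<Rightarrow> bool) \<Rightarrow> ('a \<Rightarrow> bool) \<Rightarrow> bool" where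
  "correct_advice V E VH EH b \<longleftrightarrow> min_deletion_set V E VH EH {v \<in> V. b v}"

end

(* Extend G by attaching, to every marked vertex v, n + 1 pendant copies of H that
   meet pairwise only in v. A set S with G' - S H-free that misses a marked vertex v
   must hit each of these copies away from v, so it has more than n elements, whereas
   the marked set has at most n; hence every minimum set contains the marked set.
   Conversely, after deleting the marked vertices each pendant copy falls apart into
   a block of card VH - 1 vertices with no edge to the rest, so by connectedness of H
   a remaining copy of H would lie inside G, where it is hit by assumption. *)
theory Submission
  imports Defs
begin

lemma connected_graph_constant:
  assumes "simple_graph V E" and "connected_graph V E"
    and edge: "\<And>u u'. u \<in> V \<Longrightarrow> u' \<in> V \<Longrightarrow> E u u' \<Longrightarrow> g u = g u'"
    and "u \<in> V" and "u' \<in> V"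
  shows "g u = g u'"
proof -
  have "E\<^sup>*\<^sup>* u u'" using assms unfolding connected_graph_def by blast
  then have "u' \<in> V \<and> g u = g u'"
  proof (induction rule: rtranclp_induct)
    case base
    then show ?case using \<open>u \<in> V\<close> by simp
  next
    case (step y z)
    then have "y \<in> V" "z \<in> V" using \<open>simple_graph V E\<close> unfolding simple_graph_def by blast+
    then show ?case using step edge by metis
  qed
  then show ?thesis by simp
qed

lemma induced_copy_card:
  "induced_copy V E VH EH X \<Longrightarrow> card X = card VH"
  unfolding induced_copy_def by (metis bij_betw_same_card)

lemma induced_copy_transfer:
  assumes "induced_copy V E VH EH X" and "X \<subseteq> V'"
    and "\<And>x y. x \<in> X \<Longrightarrow> y \<in> X \<Longrightarrow> E' x y \<longleftrightarrow> E x y"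
  shows "induced_copy V' E' VH EH X"
  using assms unfolding induced_copy_def by (metis bij_betwE)

lemma induced_copy_of_enumeration:
  assumes h: "bij_betw h I VH" and "inj_on g I" and "g ` I \<subseteq> V"
    and edges: "\<And>i j. i \<in> I \<Longrightarrow> j \<in> I \<Longrightarrow> EH (h i) (h j) \<longleftrightarrow> E (g i) (g j)"
  shows "induced_copy V E VH EH (g ` I)"
  unfolding induced_copy_def
proof (intro conjI exI ballI)
  show "g ` I \<subseteq> V" by fact
  have "bij_betw (inv_into I h) VH I" using h by (rule bij_betw_inv_into)
  moreover have "bij_betw g I (g ` I)" using \<open>inj_on g I\<close> by (simp add: bij_betw_def)
  ultimately show "bij_betw (g \<circ> inv_into I h) VH (g ` I)" by (rule bij_betw_trans)
  fix u v assume "u \<in> VH" "v \<in> VH"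
  then show "EH u v \<longleftrightarrow> E ((g \<circ> inv_into I h) u) ((g \<circ> inv_into I h) v)"
    using edges[of "inv_into I h u" "inv_into I h v"] h
    by (simp add: bij_betw_inv_into_right bij_betw_def inv_into_into)
qed

lemma induced_copy_within_class:
  assumes "simple_graph VH EH" and "connected_graph VH EH"
    and X: "induced_copy V E VH EH X"
    and respects: "\<And>x y. x \<in> V \<Longrightarrow> y \<in> V \<Longrightarrow> E x y \<Longrightarrow> \<phi> x = \<phi> y"
    and "x \<in> X" and "y \<in> X"
  shows "\<phi> x = \<phi> y"
proof -
  obtain f where XV: "X \<subseteq> V" and f: "bij_betw f VH X"
    and ef: "\<forall>u\<in>VH. \<forall>v\<in>VH. EH u v \<longleftrightarrow> E (f u) (f v)"
    using X unfolding induced_copy_def by blast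
  obtain u u' where "u \<in> VH" "u' \<in> VH" "x = f u" "y = f u'"
    using f \<open>x \<in> X\<close> \<open>y \<in> X\<close> unfolding bij_betw_def by blast
  moreover have "(\<phi> \<circ> f) u = (\<phi> \<circ> f) u'"
  proof (rule connected_graph_constant[OF assms(1,2) _ \<open>u \<in> VH\<close> \<open>u' \<in> VH\<close>])
    fix a a' assume "a \<in> VH" "a' \<in> VH" "EH a a'"
    moreover have "f a \<in> V" "f a' \<in> V" using \<open>a \<in> VH\<close> \<open>a' \<in> VH\<close> f XV by (auto dest: bij_betwE)
    ultimately show "(\<phi> \<circ> f) a = (\<phi> \<circ> f) a'" using ef respects by simp
  qed
  ultimately show ?thesis by simp
qed

lemma deletion_set_meets_copy:
  assumes "deletion_set V E VH EH T" and "induced_copy V E VH EH X"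
  shows "X \<inter> T \<noteq> {}"
proof
  assume "X \<inter> T = {}"
  then have "induced_copy (V - T) E VH EH X"
    using assms(2) by (auto simp: induced_copy_def)
  then show False using assms(1) unfolding deletion_set_def H_free_def by blast
qed

lemma deletion_set_card_ge_sunflower:
  assumes T: "deletion_set V E VH EH T" and "finite V" and "v \<notin> T"
    and copies: "\<And>i. i < m \<Longrightarrow> induced_copy V E VH EH (X i)"
    and petals: "\<And>i j. i < m \<Longrightarrow> j < m \<Longrightarrow> i \<noteq> j \<Longrightarrow> X i \<inter> X j \<subseteq> {v}"
  shows "m \<le> card T"
proof -
  have "\<exists>t. t \<in> X i \<inter> T" if "i < m" for i
    using deletion_set_meets_copy[OF T copies[OF that]] by blast
  then obtain g where g: "\<And>i. i < m \<Longrightarrow> g i \<in> X i \<inter> T" by metis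
  have "inj_on g {0..<m}"
  proof (rule inj_onI)
    fix i j assume "i \<in> {0..<m}" "j \<in> {0..<m}" "g i = g j"
    then show "i = j" using g[of i] g[of j] petals[of i j] \<open>v \<notin> T\<close> by auto
  qed
  moreover have "finite T" using T \<open>finite V\<close> unfolding deletion_set_def by (blast intro: finite_subset)
  ultimately have "card {0..<m} \<le> card T" using g by (intro card_inj_on_le) auto
  then show ?thesis by simp
qed

lemma min_deletion_set_unique:
  assumes "finite V" and B: "deletion_set V E VH EH B"
    and dominates: "\<And>T. deletion_set V E VH EH T \<Longrightarrow> B \<subseteq> T \<or> card B < card T"
  shows "min_deletion_set V E VH EH S \<longleftrightarrow> S = B"
proof -
  have fin: "finite T" if "deletion_set V E VH EH T" for T
    using that \<open>finite V\<close> unfolding deletion_set_def by (blast intro: finite_subset)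
  have Bmin: "min_deletion_set V E VH EH B"
    unfolding min_deletion_set_def using B dominates fin by (auto intro: card_mono less_imp_le)
  show ?thesis
  proof
    assume S: "min_deletion_set V E VH EH S"
    then have "deletion_set V E VH EH S" "card S \<le> card B"
      using B unfolding min_deletion_set_def by auto
    then show "S = B" using dominates fin by (metis card_seteq not_less)
  qed (use Bmin in simp)
qed

text \<open>Block c of new vertices consists of pendant c j = n + c K + j for j < K and
  belongs to the vertex c div petal_count, so every vertex v < n owns petal_count blocks.
  If the owner is marked, block and owner span a copy of H in which the owner plays h 0
  and pendant c j plays h (j + 1); blocks of unmarked vertices stay isolated.\<close>
locale pendant_extension =
  fixes VH :: "'b set" and EH :: "'b \<Rightarrow> 'b \<Rightarrow> bool"
    and n :: nat and E :: "nat \<Rightarrow> nat \<Rightarrow> bool" and b :: "nat \<Rightarrow> bool"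
    and h :: "nat \<Rightarrow> 'b"
  assumes H: "simple_graph VH EH" and H_connected: "connected_graph VH EH"
    and H_nontrivial: "card VH > 1"
    and G: "simple_graph {0..<n} E"
    and enum: "bij_betw h {0..<card VH} VH"
begin

definition K :: nat where "K = card VH - 1"
definition petal_count :: nat where "petal_count = Suc n"
definition ext_size :: nat where "ext_size = n + n * petal_count * K"

definition pendant :: "nat \<Rightarrow> nat \<Rightarrow> nat" where "pendant c j = n + c * K + j"
definition block :: "nat \<Rightarrow> nat" where "block x = (x - n) div K"
definition slot :: "nat \<Rightarrow> nat" where "slot x = (x - n) mod K"
definition owner :: "nat \<Rightarrow> nat" where "owner x = block x div petal_count"
definition label :: "nat \<Rightarrow> 'b" where "label x = h (Suc (slot x))"

definition Eext :: "nat \<Rightarrow> nat \<Rightarrow> bool" where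
  "Eext x y \<longleftrightarrow> x < ext_size \<and> y < ext_size \<and>
     ((x < n \<and> y < n \<and> E x y) \<or>
      (n \<le> x \<and> n \<le> y \<and> block x = block y \<and> b (owner x) \<and> EH (label x) (label y)) \<or>
      (x < n \<and> n \<le> y \<and> b x \<and> owner y = x \<and> EH (h 0) (label y)) \<or>
      (y < n \<and> n \<le> x \<and> b y \<and> owner x = y \<and> EH (label x) (h 0)))"

definition marked :: "nat set" where "marked = {t. t < n \<and> b t}"

lemma card_VH: "card VH = Suc K"
  using H_nontrivial unfolding K_def by simp

lemma K_pos: "0 < K"
  using H_nontrivial unfolding K_def by simp

lemma block_pendant [simp]: "j < K \<Longrightarrow> block (pendant c j) = c"
  unfolding block_def pendant_def by simp

lemma slot_pendant [simp]: "j < K \<Longrightarrow> slot (pendant c j) = j"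
  unfolding slot_def pendant_def by simp

lemma n_le_pendant [simp]: "n \<le> pendant c j"
  unfolding pendant_def by simp

lemma pendant_block_slot: "n \<le> x \<Longrightarrow> pendant (block x) (slot x) = x"
  unfolding pendant_def block_def slot_def by (metis div_mult_mod_eq le_add_diff_inverse add.assoc)

lemma pendant_less_ext_size:
  assumes "c < n * petal_count" and "j < K"
  shows "pendant c j < ext_size"
proof -
  have "c * K + j < (c + 1) * K" using assms by simp
  also have "\<dots> \<le> n * petal_count * K" using assms by (intro mult_le_mono1) simp
  finally show ?thesis unfolding pendant_def ext_size_def by simp
qed

lemma n_le_ext_size: "n \<le> ext_size"
  unfolding ext_size_def by simp

lemma simple_graph_Eext: "simple_graph {0..<ext_size} Eext"
  unfolding simple_graph_def
proof (intro conjI allI impI)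
  fix x y assume "Eext x y"
  then show "x \<in> {0..<ext_size}" "y \<in> {0..<ext_size}" unfolding Eext_def by auto
  have "EH u v \<Longrightarrow> EH v u" for u v using H unfolding simple_graph_def by blast
  moreover have "E u v \<Longrightarrow> E v u" for u v using G unfolding simple_graph_def by blast
  ultimately
  show "Eext y x" using \<open>Eext x y\<close> unfolding Eext_def owner_def by (elim conjE disjE) auto
next
  fix x
  have "\<not> EH u u" for u using H unfolding simple_graph_def by blast
  moreover have "\<not> E u u" for u using G unfolding simple_graph_def by blast
  ultimately show "\<not> Eext x x" unfolding Eext_def by auto
qed simp

lemma Eext_old: "x < n \<Longrightarrow> y < n \<Longrightarrow> Eext x y \<longleftrightarrow> E x y"
  using n_le_ext_size unfolding Eext_def by auto

definition petal_map :: "nat \<Rightarrow> nat \<Rightarrow> nat \<Rightarrow> nat" where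
  "petal_map v i j = (if j = 0 then v else pendant (v * petal_count + i) (j - 1))"

definition petal :: "nat \<Rightarrow> nat \<Rightarrow> nat set" where
  "petal v i = petal_map v i ` {0..<card VH}"

lemma petal_induced_copy:
  assumes v: "v < n" "b v" and i: "i < petal_count"
  shows "induced_copy {0..<ext_size} Eext VH EH (petal v i)"
  unfolding petal_def
proof (rule induced_copy_of_enumeration[OF enum])
  let ?c = "v * petal_count + i"
  have c: "?c < n * petal_count"
  proof -
    have "?c < (v + 1) * petal_count" using i by simp
    also have "\<dots> \<le> n * petal_count" using v by (intro mult_le_mono1) simp
    finally show ?thesis .
  qed
  have owner_c: "owner (pendant ?c j) = v" if "j < K" for j
    using that i unfolding owner_def by simp
  define y where "y j = pendant ?c (j - 1)" for j
  have new: "n \<le> y j \<and> y j < ext_size \<and> block (y j) = ?c \<and> owner (y j) = v \<and> label (y j) = h j"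
    if "0 < j" "j < card VH" for j
    using that pendant_less_ext_size[OF c] owner_c unfolding y_def card_VH label_def by simp
  have map_eq: "petal_map v i j = (if j = 0 then v else y j)" for j
    unfolding petal_map_def y_def by simp
  have "v < ext_size" using v n_le_ext_size by simp
  then show "petal_map v i ` {0..<card VH} \<subseteq> {0..<ext_size}"
    using new unfolding map_eq by auto
  show "inj_on (petal_map v i) {0..<card VH}"
  proof (rule inj_onI)
    fix j j' assume j: "j \<in> {0..<card VH}" and j': "j' \<in> {0..<card VH}"
      and eq: "petal_map v i j = petal_map v i j'"
    have slot_y: "slot (y j) = j - 1" if "0 < j" "j < card VH" for j
      using that unfolding y_def card_VH by simp
    consider "j = 0" "j' = 0" | "j = 0" "0 < j'" | "0 < j" "j' = 0" | "0 < j" "0 < j'" by blast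
    then show "j = j'"
    proof cases
      case 2
      then have "n \<le> v" using eq new[of j'] j' by (simp add: map_eq)
      then show ?thesis using v by simp
    next
      case 3
      then have "n \<le> v" using eq new[of j] j by (simp add: map_eq)
      then show ?thesis using v by simp
    next
      case 4
      then have "j - 1 = j' - 1" using eq j j' slot_y[of j] slot_y[of j'] by (simp add: map_eq)
      then show ?thesis using 4 by simp
    qed simp
  qed
  have EH_irrefl: "\<not> EH u u" for u using H unfolding simple_graph_def by blast
  have Eext_irrefl: "\<not> Eext x x" for x using simple_graph_Eext unfolding simple_graph_def by blast
  fix j j' assume j: "j \<in> {0..<card VH}" and j': "j' \<in> {0..<card VH}"
  consider "j = 0" "j' = 0" | "j = 0" "0 < j'" | "0 < j" "j' = 0" | "0 < j" "0 < j'" by blast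
  then show "EH (h j) (h j') \<longleftrightarrow> Eext (petal_map v i j) (petal_map v i j')"
  proof cases
    case 1
    then show ?thesis using EH_irrefl Eext_irrefl by (simp add: map_eq)
  next
    case 2
    then have "n \<le> y j'" "y j' < ext_size" "owner (y j') = v" "label (y j') = h j'"
      using new j' by auto
    then show ?thesis using 2 v \<open>v < ext_size\<close> by (simp add: map_eq Eext_def)
  next
    case 3
    then have "n \<le> y j" "y j < ext_size" "owner (y j) = v" "label (y j) = h j"
      using new j by auto
    then show ?thesis using 3 v \<open>v < ext_size\<close> by (simp add: map_eq Eext_def)
  next
    case 4
    then show ?thesis using new[OF _ j[simplified]] new[OF _ j'[simplified]] v
      by (simp add: map_eq Eext_def)
  qed
qed

lemma petals_meet_in_center:
  assumes "i \<noteq> i'"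
  shows "petal v i \<inter> petal v i' \<subseteq> {v}"
proof
  fix x assume "x \<in> petal v i \<inter> petal v i'"
  then obtain j j' where "j < card VH" "j' < card VH"
    and "x = petal_map v i j" "x = petal_map v i' j'"
    unfolding petal_def by auto
  moreover have "block (pendant (v * petal_count + i) (j - 1)) \<noteq> block (pendant (v * petal_count + i') (j' - 1))"
    if "0 < j" "0 < j'"
    using that \<open>j < card VH\<close> \<open>j' < card VH\<close> assms unfolding card_VH by simp
  ultimately show "x \<in> {v}"
    unfolding petal_map_def by (auto split: if_splits)
qed

lemma marked_deletion_set:
  assumes hit: "\<And>X. induced_copy {0..<n} E VH EH X \<Longrightarrow> \<exists>t\<in>X. b t"
  shows "deletion_set {0..<ext_size} Eext VH EH marked"
  unfolding deletion_set_def H_free_def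
proof (intro conjI notI)
  show "marked \<subseteq> {0..<ext_size}" using n_le_ext_size unfolding marked_def by auto
  assume "\<exists>X. induced_copy ({0..<ext_size} - marked) Eext VH EH X"
  then obtain X where X: "induced_copy ({0..<ext_size} - marked) Eext VH EH X" by blast
  then have XV: "X \<subseteq> {0..<ext_size} - marked" unfolding induced_copy_def by blast
  define \<phi> where "\<phi> x = (if x < n then None else Some (block x))" for x
  have same_class: "\<phi> x = \<phi> y" if "x \<in> X" "y \<in> X" for x y
  proof (rule induced_copy_within_class[OF H H_connected X _ that])
    fix x y assume "x \<in> {0..<ext_size} - marked" "y \<in> {0..<ext_size} - marked" "Eext x y"
    then have "x < n \<Longrightarrow> \<not> b x" "y < n \<Longrightarrow> \<not> b y" "Eext x y" unfolding marked_def by auto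
    then show "\<phi> x = \<phi> y" unfolding \<phi>_def Eext_def by auto
  qed
  have "card X = card VH" using X by (rule induced_copy_card)
  then have "X \<noteq> {}" using H_nontrivial by auto
  then obtain x0 where x0: "x0 \<in> X" by blast
  show False
  proof (cases "x0 < n")
    case True
    then have old: "x < n" if "x \<in> X" for x using same_class[OF that x0] unfolding \<phi>_def
      by (auto split: if_splits)
    have "induced_copy {0..<n} E VH EH X"
      by (rule induced_copy_transfer[OF X]) (use old Eext_old in auto)
    then obtain t where "t \<in> X" "b t" using hit by blast
    then show False using old XV unfolding marked_def by auto
  next
    case False
    then have in_block: "n \<le> x \<and> block x = block x0" if "x \<in> X" for x
      using same_class[OF that x0] unfolding \<phi>_def by (auto split: if_splits)
    have "X \<subseteq> pendant (block x0) ` {0..<K}"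
    proof
      fix x assume "x \<in> X"
      then have "x = pendant (block x0) (slot x)" using in_block[of x] pendant_block_slot[of x] by simp
      moreover have "slot x < K" using K_pos unfolding slot_def by simp
      ultimately show "x \<in> pendant (block x0) ` {0..<K}" by simp
    qed
    then have "card X \<le> card (pendant (block x0) ` {0..<K})" by (intro card_mono) simp_all
    also have "\<dots> \<le> K" using card_image_le[of "{0..<K}" "pendant (block x0)"] by simp
    finally have "card X \<le> K" .
    then show False using \<open>card X = card VH\<close> card_VH by simp
  qed
qed

lemma marked_dominates:
  assumes T: "deletion_set {0..<ext_size} Eext VH EH T"
  shows "marked \<subseteq> T \<or> card marked < card T"
proof (cases "marked \<subseteq> T")
  case False
  then obtain v where "v \<in> marked" "v \<notin> T" by blast
  then have "petal_count \<le> card T"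
    using petal_induced_copy petals_meet_in_center unfolding marked_def
    by (intro deletion_set_card_ge_sunflower[OF T, of v petal_count "petal v"]) auto
  moreover have "card marked \<le> card {0..<n}" by (rule card_mono) (auto simp: marked_def)
  ultimately show ?thesis unfolding petal_count_def by simp
qed simp

end

theorem mainTheorem6:
  fixes VH :: "'b set" and EH :: "'b \<Rightarrow> 'b \<Rightarrow> bool"
    and n :: nat and E :: "nat \<Rightarrow> nat \<Rightarrow> bool" and b :: "nat \<Rightarrow> bool"
  assumes H: "simple_graph VH EH" and Hconn: "connected_graph VH EH"
    and Hk: "card VH > 1"
    and G: "simple_graph {0..<n} E"
    and hit: "\<And>X. induced_copy {0..<n} E VH EH X \<Longrightarrow> \<exists>t\<in>X. b t"
  shows "\<exists>n' E'. n \<le> n' \<and> simple_graph {0..<n'} E'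
           \<and> (\<forall>u v. u < n \<and> v < n \<longrightarrow> (E' u v \<longleftrightarrow> E u v))
           \<and> correct_advice {0..<n'} E' VH EH (\<lambda>t. t < n \<and> b t)
           \<and> (\<forall>c. correct_advice {0..<n'} E' VH EH c \<longrightarrow>
                   (\<forall>t < n'. c t \<longleftrightarrow> (t < n \<and> b t)))
           \<and> (\<forall>S. min_deletion_set {0..<n'} E' VH EH S \<longleftrightarrow> S = {t. t < n \<and> b t})"
proof -
  have "finite VH" using H unfolding simple_graph_def by blast
  then obtain h where "bij_betw h {0..<card VH} VH" using ex_bij_betw_nat_finite by blast
  with H Hconn Hk G interpret P: pendant_extension VH EH n E b h
    by (rule pendant_extension.intro)
  have unique: "min_deletion_set {0..<P.ext_size} P.Eext VH EH S \<longleftrightarrow> S = P.marked" for S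
    using P.marked_deletion_set[OF hit] P.marked_dominates by (intro min_deletion_set_unique) auto
  have marked_eq: "{t \<in> {0..<P.ext_size}. t < n \<and> b t} = P.marked"
    using P.n_le_ext_size unfolding P.marked_def by auto
  show ?thesis
  proof (intro exI[of _ P.ext_size] exI[of _ P.Eext] conjI allI impI)
    show "correct_advice {0..<P.ext_size} P.Eext VH EH (\<lambda>t. t < n \<and> b t)"
      unfolding correct_advice_def unique marked_eq ..
    fix c t assume "correct_advice {0..<P.ext_size} P.Eext VH EH c" and "t < P.ext_size"
    then have "c t \<longleftrightarrow> t \<in> P.marked" unfolding correct_advice_def unique by auto
    then show "c t \<longleftrightarrow> t < n \<and> b t" unfolding P.marked_def by simp
  qed (use P.n_le_ext_size P.simple_graph_Eext P.Eext_old unique in \<open>simp_all add: P.marked_def\<close>)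
qed

end
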